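(* For every positive integer $n$ that is a perfect square, there exist two sets $A_1,A_2$ of $n$ lines each in $\mathbb{R}^2$ such that for every line $\ell$ there are $i\in\{1,2\}$ and a closed halfplane $\ell^\sigma$ bounded by $\ell$ such that every subset $A'\subseteq A_i$ with $V(A')\subseteq\ell^\sigma$ satisfies $|A'|\le\sqrt{n}$.
   Context: For a finite set $A$ of lines in $\mathbb{R}^2$, $V(A)$ denotes the set of all intersection points of pairs of lines of $A$. *)

theory Defs
  imports Complex_Main
begin

definition is_line :: "(real \<times> real) set \<Rightarrow> bool" where
  "is_line L \<longleftrightarrow> (\<exists>a b c. (a, b) \<noteq> (0, 0) \<and> L = {p. a * fst p + b * snd p = c})"

definition V :: "(real \<times> real) set set \<Rightarrow> (real \<times> real) set" where
  "V A = (\<Union>L1\<in>A. \<Union>L2\<in>A. if L1 \<noteq> L2 then L1 \<inter> L2 else {})"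

definition closed_halfplane_of :: "(real \<times> real) set \<Rightarrow> (real \<times> real) set \<Rightarrow> bool" where
  "closed_halfplane_of L H \<longleftrightarrow>
     (\<exists>a b c. (a, b) \<noteq> (0, 0) \<and> L = {p. a * fst p + b * snd p = c}
              \<and> H = {p. a * fst p + b * snd p \<le> c})"

end

theory Submission
  imports Defs
begin

(* Write n = k^2.  The two families are
     A_1 = the "grid" lines  x + p y = (p div k) + 1  (0 <= p < k^2), forming k groups of
           k lines; lines in one group meet on the positive x-axis, lines of different
           groups meet strictly above the x-axis;
     A_2 = the "pencil" lines  x + p y = 0  (0 <= p < n), all passing through the origin.
   Every line l = {a x + b y = c} bounds a closed halfplane H that either misses the origin
   (c \<noteq> 0), or misses the whole positive x-axis (c = 0, a \<noteq> 0), or lies below the x-axis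
   (l is the x-axis).  All three bounds follow from one counting principle: if the lines
   of A' are coloured so that any two lines of the same colour meet outside H, and
   V(A') \<subseteq> H, then the colouring is injective on A', so |A'| is at most the number of
   colours.  The colours are: a single colour (pencil, origin missed), the group p div k
   (grid, axis missed), and the position p mod k in the group (grid, H below the axis). *)

lemma mem_V_intro:
  assumes "L1 \<in> A" "L2 \<in> A" "L1 \<noteq> L2" "z \<in> L1" "z \<in> L2"
  shows "z \<in> V A"
  using assms unfolding V_def by (intro UN_I[of L1] UN_I[of L2]) auto

lemma card_le_colours:
  fixes L :: "'i \<Rightarrow> (real \<times> real) set" and g :: "'i \<Rightarrow> 'c"
  assumes sub: "A' \<subseteq> L ` S" and inj: "inj_on L S" and VH: "V A' \<subseteq> H"
    and colours: "g ` S \<subseteq> T" "finite T"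
    and meet_outside: "\<And>p q. p \<in> S \<Longrightarrow> q \<in> S \<Longrightarrow> p \<noteq> q \<Longrightarrow> g p = g q \<Longrightarrow>
                              \<exists>z \<in> L p \<inter> L q. z \<notin> H"
  shows "card A' \<le> card T"
proof -
  define P where "P = {p \<in> S. L p \<in> A'}"
  have A'_eq: "A' = L ` P" using sub unfolding P_def by blast
  have card_eq: "card A' = card P"
    unfolding A'_eq by (rule card_image) (use inj in \<open>auto simp: P_def intro: inj_on_subset\<close>)
  have "inj_on g P"
  proof (rule inj_onI, rule ccontr)
    fix p q assume pq: "p \<in> P" "q \<in> P" "g p = g q" "p \<noteq> q"
    then obtain z where z: "z \<in> L p" "z \<in> L q" "z \<notin> H"
      using meet_outside unfolding P_def by blast
    have "L p \<noteq> L q" using pq inj unfolding P_def by (auto dest: inj_onD)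
    then have "z \<in> V A'" using pq z mem_V_intro unfolding P_def by blast
    then show False using VH z by blast
  qed
  moreover have "g ` P \<subseteq> T" using colours(1) unfolding P_def by blast
  ultimately show ?thesis using card_eq card_inj_on_le[OF _ _ colours(2)] by metis
qed

lemma is_line_slope: "is_line {z. fst z + s * snd z = (c::real)}"
  unfolding is_line_def by (rule exI[of _ 1], rule exI[of _ s], rule exI[of _ c]) simp

lemma slope_line_eqD:
  fixes s t c d :: real
  assumes eq: "{z. fst z + s * snd z = c} = {z. fst z + t * snd z = d}"
  shows "s = t \<and> c = d"
proof -
  have "(c, 0) \<in> {z. fst z + s * snd z = c}" by simp
  then have "(c, 0) \<in> {z. fst z + t * snd z = d}" by (simp only: eq)
  then have cd: "c = d" by simp
  have "(c - s, 1) \<in> {z. fst z + s * snd z = c}" by simp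
  then have "(c - s, 1) \<in> {z. fst z + t * snd z = d}" by (simp only: eq)
  then show ?thesis using cd by simp
qed

lemma slope_lines_cross_above:
  fixes s t c d :: real
  assumes "s < t" "c < d"
  shows "\<exists>z \<in> {z. fst z + s * snd z = c} \<inter> {z. fst z + t * snd z = d}. snd z > 0"
proof -
  define y where "y = (d - c) / (t - s)"
  have y_pos: "y > 0" using assms unfolding y_def by simp
  have "(t - s) * y = d - c" using assms unfolding y_def by simp
  then have "(c - s * y, y) \<in> {z. fst z + t * snd z = d}" by (simp add: algebra_simps)
  moreover have "(c - s * y, y) \<in> {z. fst z + s * snd z = c}" by simp
  ultimately show ?thesis using y_pos by (intro bexI[of _ "(c - s * y, y)"]) auto
qed

definition grid_line :: "nat \<Rightarrow> nat \<Rightarrow> (real \<times> real) set" where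
  "grid_line k p = {z. fst z + real p * snd z = real (p div k) + 1}"

definition pencil_line :: "nat \<Rightarrow> (real \<times> real) set" where
  "pencil_line p = {z. fst z + real p * snd z = 0}"

lemma inj_grid_line: "inj (grid_line k)"
proof (rule injI)
  fix p q assume "grid_line k p = grid_line k q"
  then have "real p = real q \<and> real (p div k) + 1 = real (q div k) + 1"
    unfolding grid_line_def by (rule slope_line_eqD)
  then show "p = q" by simp
qed

lemma inj_pencil_line: "inj pencil_line"
proof (rule injI)
  fix p q assume "pencil_line p = pencil_line q"
  then have "real p = real q \<and> (0::real) = 0"
    unfolding pencil_line_def by (rule slope_line_eqD)
  then show "p = q" by simp
qed

lemma family_props:
  assumes "inj f" "\<And>p. is_line (f p)"
  shows "finite (f ` {..<n}) \<and> card (f ` {..<n}) = n \<and> (\<forall>L \<in> f ` {..<n}. is_line L)"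
proof -
  have "card (f ` {..<n}) = n"
    using card_image[OF inj_on_subset[OF assms(1)], of "{..<n}"] by simp
  then show ?thesis using assms(2) by simp
qed

lemma grid_lines_cross_above:
  assumes "p div k \<noteq> q div k"
  shows "\<exists>z \<in> grid_line k p \<inter> grid_line k q. snd z > 0"
proof -
  have ordered: "\<exists>z \<in> grid_line k p \<inter> grid_line k q. snd z > 0"
    if "p div k < q div k" for p q
  proof -
    have "p < q" using that by (metis div_le_mono not_le)
    moreover have "real (p div k) + 1 < real (q div k) + 1" using that by simp
    ultimately show ?thesis
      unfolding grid_line_def by (intro slope_lines_cross_above) simp_all
  qed
  from assms consider "p div k < q div k" | "q div k < p div k" by linarith
  then show ?thesis
  proof cases
    case 1
    then show ?thesis by (rule ordered)
  next
    case 2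
    then show ?thesis using ordered[of q p] by (simp add: Int_commute)
  qed
qed

lemma pencil_bound:
  assumes "A' \<subseteq> pencil_line ` S" "V A' \<subseteq> H" "(0, 0) \<notin> H"
  shows "card A' \<le> 1"
proof -
  have "card A' \<le> card {()}"
    by (rule card_le_colours[OF assms(1) inj_on_subset[OF inj_pencil_line] assms(2),
          where g = "\<lambda>_. ()"]) (use assms(3) in \<open>auto simp: pencil_line_def\<close>)
  then show ?thesis by simp
qed

text \<open>If the intersections avoid the positive x-axis, each group contributes at most one
  line, since the lines of group \<open>j\<close> all pass through \<open>(j + 1, 0)\<close>.\<close>
lemma grid_bound_axis:
  assumes "A' \<subseteq> grid_line k ` {..<k * k}" "V A' \<subseteq> H" "\<forall>x > 0. (x, 0) \<notin> H"
  shows "card A' \<le> k"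
proof -
  have "card A' \<le> card {..<k}"
  proof (rule card_le_colours[OF assms(1) inj_on_subset[OF inj_grid_line] assms(2),
        where g = "\<lambda>p. p div k"])
    show "(\<lambda>p. p div k) ` {..<k * k} \<subseteq> {..<k}"
      by (auto simp: less_mult_imp_div_less)
    fix p q assume "p div k = q div k"
    then have "(real (p div k) + 1, 0) \<in> grid_line k p \<inter> grid_line k q"
      by (simp add: grid_line_def)
    moreover have "(real (p div k) + 1, 0) \<notin> H" using assms(3) by simp
    ultimately show "\<exists>z \<in> grid_line k p \<inter> grid_line k q. z \<notin> H" by blast
  qed auto
  then show ?thesis by simp
qed

text \<open>If the intersections lie on or below the x-axis, all lines come from one group, so
  their positions \<open>p mod k\<close> inside the group are distinct.\<close>
lemma grid_bound_below:
  assumes "A' \<subseteq> grid_line k ` {..<k * k}" "V A' \<subseteq> H" "\<forall>z \<in> H. snd z \<le> 0"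
  shows "card A' \<le> k"
proof -
  have "card A' \<le> card {..<k}"
  proof (rule card_le_colours[OF assms(1) inj_on_subset[OF inj_grid_line] assms(2),
        where g = "\<lambda>p. p mod k"])
    show "(\<lambda>p. p mod k) ` {..<k * k} \<subseteq> {..<k}"
      by (auto intro!: mod_less_divisor intro: gr0I)
    fix p q assume "p \<noteq> q" "p mod k = q mod k"
    then have "p div k \<noteq> q div k" by (metis div_mult_mod_eq)
    then obtain z where "z \<in> grid_line k p \<inter> grid_line k q" "snd z > 0"
      using grid_lines_cross_above by blast
    moreover have "z \<notin> H" using assms(3) \<open>snd z > 0\<close> by force
    ultimately show "\<exists>z \<in> grid_line k p \<inter> grid_line k q. z \<notin> H" by blast
  qed auto
  then show ?thesis by simp
qed

lemma closed_halfplane_scaled: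
  assumes "(a, b) \<noteq> (0, 0)" "\<sigma> \<noteq> 0"
  shows "closed_halfplane_of {p. a * fst p + b * snd p = c}
                             {p. \<sigma> * (a * fst p + b * snd p) \<le> \<sigma> * c}"
  unfolding closed_halfplane_of_def
  by (rule exI[of _ "\<sigma> * a"], rule exI[of _ "\<sigma> * b"], rule exI[of _ "\<sigma> * c"])
     (use assms in \<open>auto simp: distrib_left[symmetric] mult.assoc\<close>)

lemma halfplane_trichotomy:
  assumes "is_line l"
  obtains H where "closed_halfplane_of l H" "(0, 0) \<notin> H"
    | H where "closed_halfplane_of l H" "\<forall>x > 0. (x, 0) \<notin> H"
    | H where "closed_halfplane_of l H" "\<forall>z \<in> H. snd z \<le> 0"
proof -
  obtain a b c where ab: "(a, b) \<noteq> (0, 0)" and l: "l = {p. a * fst p + b * snd p = c}"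
    using assms unfolding is_line_def by blast
  define H where "H \<sigma> = {p. \<sigma> * (a * fst p + b * snd p) \<le> \<sigma> * c}" for \<sigma>
  have hp: "closed_halfplane_of l (H \<sigma>)" if "\<sigma> \<noteq> 0" for \<sigma>
    unfolding l H_def using closed_halfplane_scaled[OF ab that] .
  consider "c \<noteq> 0" | "c = 0" "a \<noteq> 0" | "c = 0" "a = 0" "b \<noteq> 0" using ab by auto
  then show ?thesis
  proof cases
    case 1
    have "(0, 0) \<notin> H (- c)" using 1 by (simp add: H_def mult_le_0_iff)
    then show ?thesis using that(1) hp[of "- c"] 1 by simp
  next
    case 2
    have "a * a > 0" using 2 by (metis not_real_square_gt_zero)
    then have "(x, 0) \<notin> H a" if "x > 0" for x
      using 2 that by (simp add: H_def mult.assoc[symmetric] not_le)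
    then show ?thesis using that(2) hp 2 by blast
  next
    case 3
    have "snd z \<le> 0" if "z \<in> H b" for z
      using 3 that by (auto simp: H_def mult.assoc[symmetric] mult_le_0_iff)
    then show ?thesis using that(3) hp 3 by blast
  qed
qed

theorem mainTheorem4:
  fixes n :: nat
  assumes "n > 0" and "\<exists>k::nat. n = k ^ 2"
  shows "\<exists>A :: nat \<Rightarrow> (real \<times> real) set set.
           (\<forall>i\<in>{1, 2}. finite (A i) \<and> card (A i) = n \<and> (\<forall>L\<in>A i. is_line L)) \<and>
           (\<forall>l. is_line l \<longrightarrow>
              (\<exists>i\<in>{1, 2}. \<exists>H. closed_halfplane_of l H \<and>
                 (\<forall>A' \<subseteq> A i. V A' \<subseteq> H \<longrightarrow> real (card A') \<le> sqrt (real n))))"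
proof -
  obtain k where n: "n = k * k" using assms(2) by (auto simp: power2_eq_square)
  then have sqrt_n: "sqrt (real n) = real k" and k_pos: "k \<ge> 1"
    using assms(1) by (auto simp: real_sqrt_mult)
  define A where "A i = (if i = 1 then grid_line k ` {..<n} else pencil_line ` {..<n})"
    for i :: nat
  have families: "\<forall>i\<in>{1, 2}. finite (A i) \<and> card (A i) = n \<and> (\<forall>L\<in>A i. is_line L)"
    using family_props[OF inj_grid_line] family_props[OF inj_pencil_line]
    by (auto simp: A_def grid_line_def pencil_line_def is_line_slope)
  have "\<exists>i\<in>{1, 2}. \<exists>H. closed_halfplane_of l H \<and>
          (\<forall>A' \<subseteq> A i. V A' \<subseteq> H \<longrightarrow> real (card A') \<le> sqrt (real n))" if "is_line l" for l
  proof (cases rule: halfplane_trichotomy[OF that])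
    case (1 H)
    have "card A' \<le> k" if "A' \<subseteq> A 2" "V A' \<subseteq> H" for A'
      using pencil_bound[of A' "{..<n}" H] that 1 k_pos by (simp add: A_def)
    then show ?thesis using 1 by (intro bexI[of _ 2] exI[of _ H]) (auto simp: sqrt_n)
  next
    case (2 H)
    then show ?thesis using grid_bound_axis[of _ k H]
      by (intro bexI[of _ 1] exI[of _ H]) (auto simp: A_def sqrt_n n)
  next
    case (3 H)
    then show ?thesis using grid_bound_below[of _ k H]
      by (intro bexI[of _ 1] exI[of _ H]) (auto simp: A_def sqrt_n n)
  qed
  then show ?thesis using families by blast
qed

end
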